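(* Let $\mathcal T\ge2$, $\mathcal S\ge\max\{2\mathcal T,6\}$, and $(t,x)\in\mathbb R\times\mathbb R^3$ with $|t-|x||\le1$ and $|x|\ge\max\{12,\mathcal T,2\mathcal S\}$. Then for $\sigma\in[0,1)$, $$\frac{1}{t+\mathcal T}\int_{|z|=t+\mathcal T}\frac{dS(z)}{|x+z|^{3-\sigma}}\le\frac{C}{|x|^{1-\sigma}},$$ with $C$ independent of $t$ and $x$.
   Context: $dS$ is the surface measure on the sphere $\{|z|=t+\mathcal T\}\subset\mathbb R^3$. *)

theory Defs
  imports "HOL-Analysis.Analysis"
begin

definition sphere_integral :: "(real^3 \<Rightarrow> real) \<Rightarrow> real \<Rightarrow> real" where
  "sphere_integral f r =
     (LINT p : {0..pi} \<times> {0..2*pi} | lborel.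
        f (r *\<^sub>R vector [sin (fst p) * cos (snd p), sin (fst p) * sin (snd p), cos (fst p)])
          * r^2 * sin (fst p))"

end

(*
  Write -x = |x| w(a,b) in the spherical coordinates w(th,ph) of the parametrisation, with
  r = t + T >= |x| + 1. Then |x + r w(th,ph)|^2 = (r - |x|)^2 + 2 r |x| (1 - <w(th,ph), w(a,b)>),
  and 1 - <w(th,ph), w(a,b)> dominates a multiple of (th - a)^2 + sin^2 th (ph - s)^2 for one of
  the representatives s of b modulo 2 pi. So with K ~ r |x| the integrand r^2 sin th / |x+z|^(3-sigma)
  is at most r^2 sin th A^(-g) / (A + K sin^2 th (ph - s)^2), where A = 1 + K (th - a)^2 and
  g = (1 - sigma)/2. Integrating in ph costs a factor sqrt A / (sqrt K sin th), which cancels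
  sin th; the remaining A^(-g-1/2) has integral ~ 1/sqrt K in th. Hence the sphere integral is
  O(r^2 / K) = O(r / |x|), which after division by r is O(1/|x|) <= O(|x|^(sigma-1)).
*)

theory Submission
  imports Defs
begin

lemma sin_ge_fifth:
  fixes y :: real
  assumes "0 \<le> y" "y \<le> 2"
  shows "y / 5 \<le> sin y"
proof -
  have "\<bar>sin y - (\<Sum>m<5. sin_coeff m * y ^ m)\<bar> \<le> inverse (fact 5) * \<bar>y\<bar> ^ 5"
    by (rule Maclaurin_sin_bound)
  moreover have "(\<Sum>m<5. sin_coeff m * y ^ m) = y - y^3/6"
    by (simp add: lessThan_nat_numeral sin_coeff_def fact_numeral)
  moreover have "inverse (fact 5 :: real) = 1/120" by (simp add: fact_numeral)
  ultimately have "\<bar>sin y - (y - y^3/6)\<bar> \<le> y^5/120"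
    using assms by simp
  then have taylor: "y - y^3/6 - y^5/120 \<le> sin y"
    by (simp only: abs_le_iff) linarith
  have "y^2 \<le> 4" "y^4 \<le> 16"
    using assms power_mono[of y 2 2] power_mono[of y 2 4] by simp_all
  then have "y * (y^2/6 + y^4/120) \<le> y * (4/6 + 16/120)"
    using assms by (intro mult_left_mono) auto
  then show ?thesis
    using taylor by (simp add: eval_nat_numeral field_simps)
qed

lemma abs_sin_diff_le:
  fixes x y :: real
  shows "\<bar>sin x - sin y\<bar> \<le> \<bar>x - y\<bar>"
proof -
  have "\<bar>sin x - sin y\<bar> = 2 * \<bar>sin ((x - y) / 2)\<bar> * \<bar>cos ((x + y) / 2)\<bar>"
    by (simp add: sin_diff_sin abs_mult)
  also have "\<dots> \<le> 2 * \<bar>(x - y) / 2\<bar> * 1"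
    by (intro mult_mono abs_sin_x_le_abs_x) auto
  finally show ?thesis by simp
qed

lemma one_minus_cos_ge_square:
  fixes w :: real
  assumes "\<bar>w\<bar> \<le> pi"
  shows "w^2 \<le> 50 * (1 - cos w)"
proof -
  have "\<bar>w/2\<bar> \<le> 2" using assms pi_less_4 by auto
  then have "\<bar>w/2\<bar> / 5 \<le> \<bar>sin (w/2)\<bar>"
    using sin_ge_fifth[of "\<bar>w/2\<bar>"] by (cases "w \<ge> 0") auto
  then have "(\<bar>w/2\<bar> / 5)^2 \<le> \<bar>sin (w/2)\<bar>^2"
    by (rule power_mono) simp
  moreover have "1 - cos w = 2 * (sin (w/2))^2"
    using cos_double_sin[of "w/2"] by simp
  ultimately show ?thesis by (simp add: power2_eq_square)
qed

definition bump_integral_bound :: "real \<Rightarrow> real" where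
  "bump_integral_bound g = 2 + 2 / (2*g - 1)"

lemma bump_integral_bound_pos: "g > 1/2 \<Longrightarrow> bump_integral_bound g > 0"
  unfolding bump_integral_bound_def by (simp add: add_pos_pos)

lemma nn_integral_powr_tail:
  fixes a :: real
  assumes "a > 1"
  shows "(\<integral>\<^sup>+z. ennreal (z powr (-a)) * indicator {1..} z \<partial>lborel) = ennreal (1 / (a - 1))"
proof -
  let ?F = "\<lambda>z::real. - (z powr (1 - a)) / (a - 1)"
  have "(\<integral>\<^sup>+z. ennreal (z powr (-a)) * indicator {1..} z \<partial>lborel) = 0 - ?F 1"
  proof (rule nn_integral_FTC_atLeast[where F = ?F and T = 0])
    fix z :: real assume "1 \<le> z"
    have "(?F has_real_derivative - ((1 - a) * z powr (1 - a - 1)) / (a - 1)) (at z)"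
      using \<open>1 \<le> z\<close> assms by (auto intro!: derivative_eq_intros)
    moreover have "- ((1 - a) * z powr (1 - a - 1)) / (a - 1) = z powr (-a)"
      using assms by (simp add: field_simps)
    ultimately show "(?F has_real_derivative z powr (-a)) (at z)"
      by simp
  next
    have "((\<lambda>z::real. z powr (1 - a)) \<longlongrightarrow> 0) at_top"
      using assms by (intro tendsto_neg_powr filterlim_ident) auto
    then show "(?F \<longlongrightarrow> 0) at_top"
      by (simp add: tendsto_minus_cancel_left[symmetric] tendsto_divide_zero)
  qed auto
  then show ?thesis by simp
qed

lemma bump_le_abs_powr:
  fixes z g :: real
  assumes "1 \<le> \<bar>z\<bar>" "0 \<le> g"
  shows "(1 + z^2) powr (-g) \<le> \<bar>z\<bar> powr (-2*g)"
proof -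
  have "(1 + z^2) powr (-g) \<le> (z^2) powr (-g)"
    using assms by (intro powr_mono2') auto
  also have "z^2 = \<bar>z\<bar> powr 2"
    using assms by (simp add: powr_numeral)
  also have "(\<bar>z\<bar> powr 2) powr (-g) = \<bar>z\<bar> powr (2 * (-g))"
    by (rule powr_powr)
  finally show ?thesis by simp
qed

lemma nn_integral_bump_le:
  fixes g :: real
  assumes "g > 1/2"
  shows "(\<integral>\<^sup>+z. ennreal ((1 + z^2) powr (-g)) \<partial>lborel) \<le> ennreal (bump_integral_bound g)"
proof -
  define tail where "tail z = ennreal (z powr (-2*g)) * indicator {1..} z" for z :: real
  have tail_meas [measurable]: "tail \<in> borel_measurable borel"
    unfolding tail_def by measurable
  have pointwise: "ennreal ((1 + z^2) powr (-g)) \<le> indicator {-1..1} z + tail z + tail (-z)" for z :: real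
  proof (cases "\<bar>z\<bar> \<le> 1")
    case True
    have "(1 + z^2) powr (-g) \<le> 1 powr (-g)"
      using assms by (intro powr_mono2') auto
    then show ?thesis
      using True by (intro add_increasing2) (auto simp: indicator_def abs_le_iff)
  next
    case False
    then have "ennreal ((1 + z^2) powr (-g)) \<le> ennreal (\<bar>z\<bar> powr (-2*g))"
      using assms by (intro ennreal_leI bump_le_abs_powr) auto
    also have "\<dots> = tail z + tail (-z)"
      using False by (auto simp: tail_def indicator_def)
    finally show ?thesis
      by (simp add: add.assoc add_increasing)
  qed
  have tail_reflect: "(\<integral>\<^sup>+z. tail (-z) \<partial>lborel) = (\<integral>\<^sup>+z. tail z \<partial>lborel)"
    using nn_integral_real_affine[OF tail_meas, of "-1" 0] by simp
  have tail_int: "(\<integral>\<^sup>+z. tail z \<partial>lborel) = ennreal (1 / (2*g - 1))"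
    unfolding tail_def using nn_integral_powr_tail[of "2*g"] assms by (simp add: diff_divide_distrib)
  have "(\<integral>\<^sup>+z. ennreal ((1 + z^2) powr (-g)) \<partial>lborel)
      \<le> (\<integral>\<^sup>+z. indicator {-1..1} z + tail z + tail (-z) \<partial>lborel)"
    by (intro nn_integral_mono pointwise)
  also have "\<dots> = (\<integral>\<^sup>+z. indicator {-1..1::real} z \<partial>lborel) + (\<integral>\<^sup>+z. tail z \<partial>lborel)
      + (\<integral>\<^sup>+z. tail (-z) \<partial>lborel)"
    by (simp add: nn_integral_add)
  also have "\<dots> = ennreal 2 + ennreal (1 / (2*g - 1)) + ennreal (1 / (2*g - 1))"
    by (simp add: tail_reflect tail_int)
  also have "\<dots> = ennreal (2 + 1 / (2*g - 1) + 1 / (2*g - 1))"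
  proof -
    have "0 \<le> 1 / (2*g - 1)" using assms by simp
    then show ?thesis by (simp only: ennreal_plus add_nonneg_nonneg zero_le_numeral)
  qed
  also have "\<dots> = ennreal (bump_integral_bound g)"
    by (simp add: bump_integral_bound_def add.commute)
  finally show ?thesis .
qed

lemma nn_integral_scaled_bump_le:
  fixes g K s :: real
  assumes "g > 1/2" "K > 0"
  shows "(\<integral>\<^sup>+y. ennreal ((1 + K*(y - s)^2) powr (-g)) \<partial>lborel) \<le> ennreal (bump_integral_bound g / sqrt K)"
proof -
  let ?f = "\<lambda>y. ennreal ((1 + K*(y - s)^2) powr (-g))"
  have [measurable]: "?f \<in> borel_measurable borel" by measurable
  have "(\<integral>\<^sup>+y. ?f y \<partial>lborel) = ennreal (1 / sqrt K) * (\<integral>\<^sup>+z. ?f (s + 1 / sqrt K * z) \<partial>lborel)"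
    using nn_integral_real_affine[of ?f "1 / sqrt K" s] assms by simp
  also have "(\<lambda>z. ?f (s + 1 / sqrt K * z)) = (\<lambda>z. ennreal ((1 + z^2) powr (-g)))"
    using assms by (simp add: power_divide)
  also have "ennreal (1 / sqrt K) * (\<integral>\<^sup>+z. ennreal ((1 + z^2) powr (-g)) \<partial>lborel)
      \<le> ennreal (1 / sqrt K) * ennreal (bump_integral_bound g)"
    using assms by (intro mult_left_mono nn_integral_bump_le) auto
  also have "\<dots> = ennreal (bump_integral_bound g / sqrt K)"
    using assms bump_integral_bound_pos[of g] by (simp add: ennreal_mult[symmetric])
  finally show ?thesis .
qed

definition sphere_majorant :: "real \<Rightarrow> real \<Rightarrow> real \<Rightarrow> real \<Rightarrow> real \<Rightarrow> real \<Rightarrow> real" where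
  "sphere_majorant K \<gamma> \<alpha> s \<theta> \<phi> =
     sin \<theta> * (1 + K*(\<theta> - \<alpha>)^2) powr (-\<gamma>) / (1 + K*(\<theta> - \<alpha>)^2 + K*(sin \<theta>)^2*(\<phi> - s)^2)"

lemma sphere_majorant_nonneg:
  assumes "0 \<le> K" "0 \<le> sin \<theta>"
  shows "0 \<le> sphere_majorant K \<gamma> \<alpha> s \<theta> \<phi>"
  unfolding sphere_majorant_def using assms by (simp add: add_nonneg_nonneg)

lemma sphere_majorant_measurable [measurable]:
  "(\<lambda>p. sphere_majorant K \<gamma> \<alpha> s (fst p) (snd p)) \<in> borel_measurable (lborel \<Otimes>\<^sub>M lborel)"
  unfolding sphere_majorant_def by measurable

lemma nn_integral_sphere_majorant_azimuth_le:
  assumes "K > 0" "0 \<le> \<gamma>"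
  shows "(\<integral>\<^sup>+\<phi>. ennreal (sphere_majorant K \<gamma> \<alpha> s \<theta> \<phi>) \<partial>lborel)
    \<le> ennreal (bump_integral_bound 1 / sqrt K * (1 + K*(\<theta> - \<alpha>)^2) powr (-(\<gamma> + 1/2)))"
proof (cases "sin \<theta> > 0")
  case False
  have "sphere_majorant K \<gamma> \<alpha> s \<theta> \<phi> \<le> 0" for \<phi>
  proof -
    have "0 < 1 + K*(\<theta> - \<alpha>)^2 + K*(sin \<theta>)^2*(\<phi> - s)^2"
      using assms by (intro add_pos_nonneg) auto
    then show ?thesis
      unfolding sphere_majorant_def using False by (simp add: divide_nonpos_pos mult_nonpos_nonneg)
  qed
  then show ?thesis by (simp add: ennreal_neg)
next
  case True
  define A where "A = 1 + K*(\<theta> - \<alpha>)^2"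
  have A: "A \<ge> 1" unfolding A_def using assms by simp
  define c where "c = sin \<theta> * A powr (-\<gamma>) / A"
  define K' where "K' = K * (sin \<theta>)^2 / A"
  have c: "c \<ge> 0" unfolding c_def using True A by simp
  have K': "K' > 0" unfolding K'_def using assms True A by simp
  have majorant_eq: "sphere_majorant K \<gamma> \<alpha> s \<theta> \<phi> = c * (1 + K' * (\<phi> - s)^2) powr (-1)" for \<phi>
  proof -
    have "A + K * (sin \<theta>)^2 * (\<phi> - s)^2 = A * (1 + K' * (\<phi> - s)^2)"
      unfolding K'_def using A by (simp add: field_simps)
    moreover have "0 < 1 + K' * (\<phi> - s)^2"
      using K' by (simp add: add_pos_nonneg)
    ultimately show ?thesis
      unfolding sphere_majorant_def c_def using A
      by (simp add: A_def[symmetric] powr_minus_divide)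
  qed
  have "(\<integral>\<^sup>+\<phi>. ennreal (sphere_majorant K \<gamma> \<alpha> s \<theta> \<phi>) \<partial>lborel)
      = (\<integral>\<^sup>+\<phi>. ennreal c * ennreal ((1 + K' * (\<phi> - s)^2) powr (-1)) \<partial>lborel)"
    using c by (simp only: majorant_eq ennreal_mult powr_ge_zero)
  also have "\<dots> = ennreal c * (\<integral>\<^sup>+\<phi>. ennreal ((1 + K' * (\<phi> - s)^2) powr (-1)) \<partial>lborel)"
    by (rule nn_integral_cmult) measurable
  also have "\<dots> \<le> ennreal c * ennreal (bump_integral_bound 1 / sqrt K')"
    using K' by (intro mult_left_mono nn_integral_scaled_bump_le) auto
  also have "\<dots> = ennreal (c * (bump_integral_bound 1 / sqrt K'))"
    using c by (simp add: ennreal_mult'[symmetric])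
  also have "c * (bump_integral_bound 1 / sqrt K') = bump_integral_bound 1 / sqrt K * A powr (-(\<gamma> + 1/2))"
  proof -
    define q where "q = sqrt A"
    have q: "q > 0" "A = q^2" using A by (auto simp: q_def)
    have sqrt_K': "sqrt K' = sqrt K * sin \<theta> / q"
      unfolding K'_def q_def using True A assms by (simp add: real_sqrt_mult real_sqrt_divide)
    have "A powr (-(\<gamma> + 1/2)) = A powr (-\<gamma>) * A powr (-(1/2))"
      by (simp add: powr_add[symmetric])
    also have "A powr (-(1/2)) = 1 / q"
      unfolding q_def using A by (simp add: powr_minus_divide powr_half_sqrt)
    finally have powr_eq: "A powr (-(\<gamma> + 1/2)) = A powr (-\<gamma>) / q" by simp
    show ?thesis
      unfolding c_def sqrt_K' powr_eq using True q(1) assms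
      by (simp add: q(2) field_simps power2_eq_square)
  qed
  finally show ?thesis by (simp add: A_def)
qed

lemma nn_integral_sphere_majorant_le:
  assumes "K > 0" "\<gamma> > 0"
  shows "(\<integral>\<^sup>+p. ennreal (sphere_majorant K \<gamma> \<alpha> s (fst p) (snd p)) \<partial>lborel)
    \<le> ennreal (bump_integral_bound 1 * bump_integral_bound (\<gamma> + 1/2) / K)"
proof -
  have "(\<integral>\<^sup>+p. ennreal (sphere_majorant K \<gamma> \<alpha> s (fst p) (snd p)) \<partial>lborel)
      = (\<integral>\<^sup>+p. ennreal (sphere_majorant K \<gamma> \<alpha> s (fst p) (snd p)) \<partial>(lborel \<Otimes>\<^sub>M lborel))"
    by (simp add: lborel_prod)
  also have "\<dots> = (\<integral>\<^sup>+\<theta>. (\<integral>\<^sup>+\<phi>. ennreal (sphere_majorant K \<gamma> \<alpha> s \<theta> \<phi>) \<partial>lborel) \<partial>lborel)"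
    by (simp add: lborel.nn_integral_fst[symmetric])
  also have "\<dots> \<le> (\<integral>\<^sup>+\<theta>. ennreal (bump_integral_bound 1 / sqrt K * (1 + K*(\<theta> - \<alpha>)^2) powr (-(\<gamma> + 1/2))) \<partial>lborel)"
    using assms by (intro nn_integral_mono nn_integral_sphere_majorant_azimuth_le) auto
  also have "\<dots> = (\<integral>\<^sup>+\<theta>. ennreal (bump_integral_bound 1 / sqrt K)
      * ennreal ((1 + K*(\<theta> - \<alpha>)^2) powr (-(\<gamma> + 1/2))) \<partial>lborel)"
    using assms bump_integral_bound_pos[of 1] by (intro nn_integral_cong ennreal_mult) auto
  also have "\<dots> = ennreal (bump_integral_bound 1 / sqrt K)
      * (\<integral>\<^sup>+\<theta>. ennreal ((1 + K*(\<theta> - \<alpha>)^2) powr (-(\<gamma> + 1/2))) \<partial>lborel)"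
    by (simp add: nn_integral_cmult)
  also have "\<dots> \<le> ennreal (bump_integral_bound 1 / sqrt K) * ennreal (bump_integral_bound (\<gamma> + 1/2) / sqrt K)"
    using assms by (intro mult_left_mono nn_integral_scaled_bump_le) auto
  also have "\<dots> = ennreal (bump_integral_bound 1 * bump_integral_bound (\<gamma> + 1/2) / K)"
    using assms bump_integral_bound_pos[of 1] bump_integral_bound_pos[of "\<gamma> + 1/2"]
    by (simp add: ennreal_mult[symmetric])
  finally show ?thesis .
qed

definition sphere_point :: "real \<Rightarrow> real \<Rightarrow> real^3" where
  "sphere_point \<theta> \<phi> = vector [sin \<theta> * cos \<phi>, sin \<theta> * sin \<phi>, cos \<theta>]"

lemma sphere_integral_eq:
  "sphere_integral f r = (LINT p : {0..pi} \<times> {0..2*pi} | lborel.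
     f (r *\<^sub>R sphere_point (fst p) (snd p)) * r^2 * sin (fst p))"
  by (simp add: sphere_integral_def sphere_point_def)

lemma inner_sphere_point:
  "inner (sphere_point \<theta> \<phi>) (sphere_point \<alpha> \<beta>) = sin \<theta> * sin \<alpha> * cos (\<phi> - \<beta>) + cos \<theta> * cos \<alpha>"
  by (simp add: sphere_point_def inner_vec_def sum_3 cos_diff algebra_simps)

lemma norm_sphere_point [simp]: "norm (sphere_point \<theta> \<phi>) = 1"
proof -
  have "inner (sphere_point \<theta> \<phi>) (sphere_point \<theta> \<phi>) = (sin \<theta>)^2 + (cos \<theta>)^2"
    by (simp add: inner_sphere_point power2_eq_square)
  then show ?thesis by (simp add: norm_eq_sqrt_inner)
qed

lemma norm_diff_sphere_points_sq:
  "(norm (r *\<^sub>R sphere_point \<theta> \<phi> - n *\<^sub>R sphere_point \<alpha> \<beta>))^2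
     = (r - n)^2 + 2*r*n*((1 - cos (\<theta> - \<alpha>)) + sin \<theta> * sin \<alpha> * (1 - cos (\<phi> - \<beta>)))"
proof -
  have "inner (r *\<^sub>R sphere_point \<theta> \<phi>) (n *\<^sub>R sphere_point \<alpha> \<beta>)
      = ((norm (r *\<^sub>R sphere_point \<theta> \<phi>))^2 + (norm (n *\<^sub>R sphere_point \<alpha> \<beta>))^2
         - (norm (r *\<^sub>R sphere_point \<theta> \<phi> - n *\<^sub>R sphere_point \<alpha> \<beta>))^2) / 2"
    by (rule dot_norm_neg)
  then have "(norm (r *\<^sub>R sphere_point \<theta> \<phi> - n *\<^sub>R sphere_point \<alpha> \<beta>))^2
      = r^2 + n^2 - 2*r*n * inner (sphere_point \<theta> \<phi>) (sphere_point \<alpha> \<beta>)"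
    by (simp add: algebra_simps)
  then show ?thesis
    by (simp add: inner_sphere_point cos_diff power2_eq_square algebra_simps)
qed

lemma spherical_coordinates:
  fixes v :: "real^3"
  obtains \<alpha> \<beta> where "0 \<le> \<alpha>" "\<alpha> \<le> pi" "0 \<le> \<beta>" "\<beta> < 2*pi" "v = norm v *\<^sub>R sphere_point \<alpha> \<beta>"
proof (cases "v = 0")
  case True
  then show ?thesis using that[of 0 0] by simp
next
  case False
  define e where "e = v /\<^sub>R norm v"
  have e_sq: "(e$1)^2 + (e$2)^2 + (e$3)^2 = 1"
    using norm_eq_1[of e] False by (simp add: e_def inner_vec_def sum_3 power2_eq_square)
  then have e3: "\<bar>e$3\<bar> \<le> 1"
    by (simp add: abs_square_le_1[symmetric]) (smt (verit) zero_le_power2)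
  define \<alpha> where "\<alpha> = arccos (e$3)"
  have \<alpha>: "0 \<le> \<alpha>" "\<alpha> \<le> pi" "cos \<alpha> = e$3"
    using e3 arccos_bounded[of "e$3"] by (auto simp: \<alpha>_def abs_le_iff)
  have sin_sq: "(sin \<alpha>)^2 = (e$1)^2 + (e$2)^2"
    using e_sq sin_squared_eq[of \<alpha>] \<alpha>(3) by simp
  obtain \<beta> where \<beta>: "0 \<le> \<beta>" "\<beta> < 2*pi" "e$1 = sin \<alpha> * cos \<beta>" "e$2 = sin \<alpha> * sin \<beta>"
  proof (cases "sin \<alpha> = 0")
    case True
    then show ?thesis using that[of 0] sin_sq by (simp add: sum_power2_eq_zero_iff)
  next
    case False
    have "(e$1 / sin \<alpha>)^2 + (e$2 / sin \<alpha>)^2 = ((e$1)^2 + (e$2)^2) / (sin \<alpha>)^2"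
      by (simp add: power_divide add_divide_distrib)
    also have "\<dots> = 1"
      using False sin_sq[symmetric] by simp
    finally have "(e$1 / sin \<alpha>)^2 + (e$2 / sin \<alpha>)^2 = 1" .
    then obtain t where "0 \<le> t" "t < 2*pi" "e$1 / sin \<alpha> = cos t" "e$2 / sin \<alpha> = sin t"
      by (rule sincos_total_2pi)
    then show ?thesis using that[of t] False by (simp add: field_simps)
  qed
  have e_eq: "e = sphere_point \<alpha> \<beta>"
    using \<alpha>(3) \<beta>(3,4) by (simp add: sphere_point_def vec_eq_iff forall_3)
  have "v = norm v *\<^sub>R e"
    using False by (simp add: e_def)
  then show ?thesis
    unfolding e_eq by (rule that[OF \<alpha>(1,2) \<beta>(1,2)])
qed

lemma cos_diff_representative:
  fixes \<phi> \<beta> :: real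
  assumes "0 \<le> \<phi>" "\<phi> \<le> 2*pi" "0 \<le> \<beta>" "\<beta> < 2*pi"
  obtains s where "s \<in> {\<beta>, \<beta> + 2*pi, \<beta> - 2*pi}" "\<bar>\<phi> - s\<bar> \<le> pi" "cos (\<phi> - s) = cos (\<phi> - \<beta>)"
proof -
  consider "\<bar>\<phi> - \<beta>\<bar> \<le> pi" | "\<phi> - \<beta> > pi" | "\<phi> - \<beta> < -pi" by linarith
  then show ?thesis
  proof cases
    case 1
    then show ?thesis using that[of \<beta>] by auto
  next
    case 2
    have "cos (\<phi> - (\<beta> + 2*pi)) = cos (\<phi> - \<beta>)"
      using cos_periodic[of "\<phi> - (\<beta> + 2*pi)"] by (simp add: algebra_simps)
    then show ?thesis using that[of "\<beta> + 2*pi"] 2 assms by auto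
  next
    case 3
    have "cos (\<phi> - (\<beta> - 2*pi)) = cos (\<phi> - \<beta>)"
      using cos_periodic[of "\<phi> - \<beta>"] by (simp add: algebra_simps)
    then show ?thesis using that[of "\<beta> - 2*pi"] 3 assms by auto
  qed
qed

lemma angular_gap_lower:
  fixes \<theta> \<alpha> w :: real
  assumes "0 \<le> \<theta>" "\<theta> \<le> pi" "0 \<le> \<alpha>" "\<alpha> \<le> pi" "\<bar>w\<bar> \<le> pi"
  shows "(\<theta> - \<alpha>)^2 + (sin \<theta>)^2 * w^2 \<le> 4000 * ((1 - cos (\<theta> - \<alpha>)) + sin \<theta> * sin \<alpha> * (1 - cos w))"
proof -
  define d where "d = \<theta> - \<alpha>"
  have "\<bar>d\<bar> \<le> pi"
    using assms by (auto simp: d_def abs_le_iff)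
  then have d: "d^2 \<le> 50 * (1 - cos d)"
    by (rule one_minus_cos_ge_square)
  have w: "w^2 \<le> 50 * (1 - cos w)"
    using assms by (intro one_minus_cos_ge_square)
  have sin_nonneg: "0 \<le> sin \<theta>" "0 \<le> sin \<alpha>"
    using assms by (simp_all add: sin_ge_zero)
  define X where "X = sin \<theta> * sin \<alpha> * (1 - cos w)"
  have X: "0 \<le> X"
    using sin_nonneg by (simp add: X_def)
  have "d^2 + (sin \<theta>)^2 * w^2 \<le> 4000 * ((1 - cos d) + X)"
  proof (cases "sin \<theta> \<le> 2 * sin \<alpha>")
    case True
    have "(sin \<theta>)^2 \<le> 2 * sin \<theta> * sin \<alpha>"
      using True sin_nonneg mult_left_mono[OF True, of "sin \<theta>"] by (simp add: power2_eq_square)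
    then have "(sin \<theta>)^2 * w^2 \<le> (2 * sin \<theta> * sin \<alpha>) * (50 * (1 - cos w))"
      using sin_nonneg w by (intro mult_mono) auto
    also have "\<dots> = 100 * X"
      by (simp add: X_def)
    finally show ?thesis
      using d X cos_le_one[of d] by argo
  next
    case False
    have "sin \<theta> - sin \<alpha> \<le> \<bar>d\<bar>"
      using abs_sin_diff_le[of \<theta> \<alpha>] by (simp add: d_def)
    then have "(sin \<theta>)^2 \<le> (2 * \<bar>d\<bar>)^2"
      using False sin_nonneg by (intro power_mono) auto
    moreover have "\<bar>w\<bar>^2 \<le> 4^2"
      using assms pi_less_4 by (intro power_mono) auto
    ultimately have "(sin \<theta>)^2 * w^2 \<le> (4 * d^2) * 16"
      by (intro mult_mono) (auto simp: power_mult_distrib)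
    then show ?thesis
      using d X cos_le_one[of d] by argo
  qed
  then show ?thesis
    by (simp add: d_def X_def)
qed

lemma inverse_powr_le_sphere_majorant:
  fixes K \<sigma> N \<theta> \<phi> \<alpha> s :: real
  assumes "K > 0" "0 \<le> \<sigma>" "\<sigma> < 1" "0 \<le> sin \<theta>"
    and N: "1 + K*(\<theta> - \<alpha>)^2 + K*(sin \<theta>)^2*(\<phi> - s)^2 \<le> N^2"
  shows "sin \<theta> / \<bar>N\<bar> powr (3 - \<sigma>) \<le> sphere_majorant K ((1 - \<sigma>)/2) \<alpha> s \<theta> \<phi>"
proof -
  define \<gamma> where "\<gamma> = (1 - \<sigma>)/2"
  define A where "A = 1 + K*(\<theta> - \<alpha>)^2"
  define P where "P = A + K*(sin \<theta>)^2*(\<phi> - s)^2"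
  have A: "1 \<le> A" and AP: "A \<le> P"
    using assms by (simp_all add: A_def P_def)
  have PN: "P \<le> \<bar>N\<bar> powr 2"
    using N by (simp add: A_def P_def)
  then have N0: "0 < \<bar>N\<bar>"
    using A AP by (cases "N = 0") auto
  have "P powr (\<gamma> + 1) \<le> (\<bar>N\<bar> powr 2) powr (\<gamma> + 1)"
    using PN A AP assms by (intro powr_mono2) (auto simp: \<gamma>_def)
  also have "\<dots> = \<bar>N\<bar> powr (2 * (\<gamma> + 1))"
    by (rule powr_powr)
  also have "2 * (\<gamma> + 1) = 3 - \<sigma>"
    by (simp add: \<gamma>_def)
  finally have "sin \<theta> / \<bar>N\<bar> powr (3 - \<sigma>) \<le> sin \<theta> / P powr (\<gamma> + 1)"
    using A AP N0 assms by (intro divide_left_mono) auto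
  also have "\<dots> = sin \<theta> * P powr (-\<gamma>) / P"
    using A AP by (simp add: powr_add powr_minus_divide)
  also have "\<dots> \<le> sin \<theta> * A powr (-\<gamma>) / P"
    using A AP assms by (intro divide_right_mono mult_left_mono powr_mono2') (auto simp: \<gamma>_def)
  finally show ?thesis
    by (simp add: sphere_majorant_def \<gamma>_def A_def P_def)
qed

lemma sphere_kernel_le_majorants:
  fixes x :: "real^3" and n r \<alpha> \<beta> \<theta> \<phi> \<sigma> :: real
  assumes x: "-x = n *\<^sub>R sphere_point \<alpha> \<beta>" and "0 < n" "n + 1 \<le> r"
    and "0 \<le> \<alpha>" "\<alpha> \<le> pi" "0 \<le> \<beta>" "\<beta> < 2*pi"
    and "0 \<le> \<theta>" "\<theta> \<le> pi" "0 \<le> \<phi>" "\<phi> \<le> 2*pi"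
    and "0 \<le> \<sigma>" "\<sigma> < 1"
  shows "sin \<theta> / norm (x + r *\<^sub>R sphere_point \<theta> \<phi>) powr (3 - \<sigma>)
    \<le> (\<Sum>s\<in>{\<beta>, \<beta> + 2*pi, \<beta> - 2*pi}. sphere_majorant (r*n/2000) ((1 - \<sigma>)/2) \<alpha> s \<theta> \<phi>)"
proof -
  define K where "K = r*n/2000"
  have K: "0 < K" using assms by (simp add: K_def)
  have sin_nonneg: "0 \<le> sin \<theta>" "0 \<le> sin \<alpha>"
    using assms by (simp_all add: sin_ge_zero)
  obtain s where s: "s \<in> {\<beta>, \<beta> + 2*pi, \<beta> - 2*pi}" "\<bar>\<phi> - s\<bar> \<le> pi" "cos (\<phi> - s) = cos (\<phi> - \<beta>)"
    using cos_diff_representative assms by metis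
  define Q where "Q = (1 - cos (\<theta> - \<alpha>)) + sin \<theta> * sin \<alpha> * (1 - cos (\<phi> - \<beta>))"
  have gap: "(\<theta> - \<alpha>)^2 + (sin \<theta>)^2 * (\<phi> - s)^2 \<le> 4000 * Q"
    using angular_gap_lower[of \<theta> \<alpha> "\<phi> - s"] assms s by (simp add: Q_def)
  have "x + r *\<^sub>R sphere_point \<theta> \<phi> = r *\<^sub>R sphere_point \<theta> \<phi> - n *\<^sub>R sphere_point \<alpha> \<beta>"
    using x by (simp add: algebra_simps flip: x)
  then have N: "(norm (x + r *\<^sub>R sphere_point \<theta> \<phi>))^2 = (r - n)^2 + 2*r*n*Q"
    by (simp add: norm_diff_sphere_points_sq Q_def)
  have "1 \<le> (r - n)^2"
    using assms by (simp add: one_le_power)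
  moreover have "K * ((\<theta> - \<alpha>)^2 + (sin \<theta>)^2 * (\<phi> - s)^2) \<le> 2*r*n*Q"
    using mult_left_mono[OF gap, of K] K by (simp add: K_def mult_ac)
  ultimately have "1 + K*(\<theta> - \<alpha>)^2 + K*(sin \<theta>)^2*(\<phi> - s)^2 \<le> (norm (x + r *\<^sub>R sphere_point \<theta> \<phi>))^2"
    unfolding N by (simp add: algebra_simps)
  then have "sin \<theta> / norm (x + r *\<^sub>R sphere_point \<theta> \<phi>) powr (3 - \<sigma>)
      \<le> sphere_majorant K ((1 - \<sigma>)/2) \<alpha> s \<theta> \<phi>"
    using inverse_powr_le_sphere_majorant[OF K] assms sin_nonneg by fastforce
  also have "\<dots> \<le> (\<Sum>s\<in>{\<beta>, \<beta> + 2*pi, \<beta> - 2*pi}. sphere_majorant K ((1 - \<sigma>)/2) \<alpha> s \<theta> \<phi>)"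
    using s(1) K sin_nonneg by (intro member_le_sum sphere_majorant_nonneg) auto
  finally show ?thesis by (simp add: K_def)
qed

lemma nn_integral_sphere_kernel_le:
  fixes x :: "real^3" and n r \<alpha> \<beta> \<sigma> :: real
  assumes x: "-x = n *\<^sub>R sphere_point \<alpha> \<beta>" and n: "0 < n" "n + 1 \<le> r"
    and ang: "0 \<le> \<alpha>" "\<alpha> \<le> pi" "0 \<le> \<beta>" "\<beta> < 2*pi" and "0 \<le> \<sigma>" "\<sigma> < 1"
  shows "(\<integral>\<^sup>+p. ennreal (indicator ({0..pi} \<times> {0..2*pi}) p
      * (1 / norm (x + r *\<^sub>R sphere_point (fst p) (snd p)) powr (3 - \<sigma>) * r^2 * sin (fst p))) \<partial>lborel)
    \<le> ennreal (6000 * bump_integral_bound 1 * bump_integral_bound (1 - \<sigma>/2) * r / n)"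
    (is "(\<integral>\<^sup>+p. ennreal (indicator ?box p * ?F p) \<partial>lborel) \<le> _")
proof -
  define K where "K = r*n/2000"
  define S where "S = {\<beta>, \<beta> + 2*pi, \<beta> - 2*pi}"
  define M where "M s p = ennreal (sphere_majorant K ((1 - \<sigma>)/2) \<alpha> s (fst p) (snd p))" for s p
  define B where "B = bump_integral_bound 1 * bump_integral_bound (1 - \<sigma>/2) / K"
  have K: "0 < K" using n by (simp add: K_def)
  have B: "0 \<le> B"
    using K assms bump_integral_bound_pos[of 1] bump_integral_bound_pos[of "1 - \<sigma>/2"]
    by (simp add: B_def)
  have M_meas: "M s \<in> borel_measurable lborel" for s
    unfolding M_def lborel_prod[symmetric] by measurable
  have pointwise: "ennreal (indicator ?box p * ?F p) \<le> ennreal (r^2) * (\<Sum>s\<in>S. M s p)" for p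
  proof (cases "p \<in> ?box")
    case True
    obtain \<theta> \<phi> where p: "p = (\<theta>, \<phi>)" by fastforce
    have sin_nonneg: "0 \<le> sin \<theta>"
      using True p by (simp add: sin_ge_zero)
    have "indicator ?box p * ?F p = r^2 * (sin \<theta> / norm (x + r *\<^sub>R sphere_point \<theta> \<phi>) powr (3 - \<sigma>))"
      using True by (simp add: p)
    also have "\<dots> \<le> r^2 * (\<Sum>s\<in>S. sphere_majorant K ((1 - \<sigma>)/2) \<alpha> s \<theta> \<phi>)"
      using sphere_kernel_le_majorants[OF x n ang, of \<theta> \<phi> \<sigma>] True p assms
      by (intro mult_left_mono) (auto simp: S_def K_def)
    finally have "ennreal (indicator ?box p * ?F p)
        \<le> ennreal (r^2 * (\<Sum>s\<in>S. sphere_majorant K ((1 - \<sigma>)/2) \<alpha> s \<theta> \<phi>))"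
      by (rule ennreal_leI)
    also have "\<dots> = ennreal (r^2) * (\<Sum>s\<in>S. M s p)"
      using K sin_nonneg by (simp add: M_def p ennreal_mult' sphere_majorant_nonneg)
    finally show ?thesis .
  qed simp
  have "(\<integral>\<^sup>+p. ennreal (indicator ?box p * ?F p) \<partial>lborel)
      \<le> (\<integral>\<^sup>+p. ennreal (r^2) * (\<Sum>s\<in>S. M s p) \<partial>lborel)"
    by (intro nn_integral_mono pointwise)
  also have "\<dots> = ennreal (r^2) * (\<Sum>s\<in>S. \<integral>\<^sup>+p. M s p \<partial>lborel)"
    using M_meas by (simp add: nn_integral_cmult nn_integral_sum)
  also have "\<dots> \<le> ennreal (r^2) * (\<Sum>s\<in>S. ennreal B)"
  proof (intro mult_left_mono sum_mono)
    have "(1 - \<sigma>)/2 + 1/2 = 1 - \<sigma>/2" by (simp add: field_simps)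
    then show "(\<integral>\<^sup>+p. M s p \<partial>lborel) \<le> ennreal B" for s
      using nn_integral_sphere_majorant_le[OF K, of "(1 - \<sigma>)/2"] assms by (simp add: M_def B_def)
  qed simp
  also have "\<dots> = ennreal (3 * r^2 * B)"
    using B by (simp add: S_def ennreal_mult mult_ac)
  also have "3 * r^2 * B = 6000 * bump_integral_bound 1 * bump_integral_bound (1 - \<sigma>/2) * r / n"
    using n by (simp add: B_def K_def power2_eq_square field_simps)
  finally show ?thesis .
qed

lemma sphere_integral_inverse_powr_le:
  fixes x :: "real^3" and r \<sigma> :: real
  assumes "0 < norm x" "norm x + 1 \<le> r" "0 \<le> \<sigma>" "\<sigma> < 1"
  shows "sphere_integral (\<lambda>z. 1 / norm (x + z) powr (3 - \<sigma>)) r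
    \<le> 6000 * bump_integral_bound 1 * bump_integral_bound (1 - \<sigma>/2) * r / norm x"
proof -
  obtain \<alpha> \<beta> where ang: "0 \<le> \<alpha>" "\<alpha> \<le> pi" "0 \<le> \<beta>" "\<beta> < 2*pi"
    and x: "-x = norm x *\<^sub>R sphere_point \<alpha> \<beta>"
    using spherical_coordinates[of "-x"] unfolding norm_minus_cancel by metis
  have "0 \<le> r"
    using assms(2) norm_ge_zero[of x] by linarith
  then have "0 \<le> 6000 * bump_integral_bound 1 * bump_integral_bound (1 - \<sigma>/2) * r / norm x"
    using assms(4) bump_integral_bound_pos[of 1] bump_integral_bound_pos[of "1 - \<sigma>/2"]
    by (auto intro!: divide_nonneg_nonneg mult_nonneg_nonneg)
  then show ?thesis
    using nn_integral_sphere_kernel_le[OF x assms(1,2) ang assms(3,4)]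
    unfolding sphere_integral_eq set_lebesgue_integral_def
    by (intro integral_real_bounded) simp_all
qed

theorem lemmaE6:
  fixes T S \<sigma> :: real
  assumes "T \<ge> 2" and "S \<ge> max (2*T) 6" and "0 \<le> \<sigma>" and "\<sigma> < 1"
  shows "\<exists>C. \<forall>(t::real) (x::real^3).
           \<bar>t - norm x\<bar> \<le> 1 \<and> norm x \<ge> max 12 (max T (2*S)) \<longrightarrow>
           (1 / (t + T)) * sphere_integral (\<lambda>z. 1 / norm (x + z) powr (3 - \<sigma>)) (t + T)
             \<le> C / norm x powr (1 - \<sigma>)"
proof -
  define C where "C = 6000 * bump_integral_bound 1 * bump_integral_bound (1 - \<sigma>/2)"
  have C: "0 < C"
    using assms bump_integral_bound_pos[of 1] bump_integral_bound_pos[of "1 - \<sigma>/2"]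
    by (simp add: C_def)
  show ?thesis
  proof (intro exI[of _ C] allI impI, elim conjE)
    fix t :: real and x :: "real^3"
    assume "\<bar>t - norm x\<bar> \<le> 1" "norm x \<ge> max 12 (max T (2*S))"
    then have x: "1 \<le> norm x" "0 < norm x" "norm x + 1 \<le> t + T"
      using assms(1) by auto
    have "(1 / (t + T)) * sphere_integral (\<lambda>z. 1 / norm (x + z) powr (3 - \<sigma>)) (t + T)
        \<le> (1 / (t + T)) * (C * (t + T) / norm x)"
      using sphere_integral_inverse_powr_le[of x "t + T" \<sigma>] x assms
      by (intro mult_left_mono) (auto simp: C_def)
    also have "\<dots> = C / norm x"
      using x by simp
    also have "\<dots> \<le> C / norm x powr (1 - \<sigma>)"
      using x C assms powr_mono[of "1 - \<sigma>" 1 "norm x"] by (intro divide_left_mono) auto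
    finally show "(1 / (t + T)) * sphere_integral (\<lambda>z. 1 / norm (x + z) powr (3 - \<sigma>)) (t + T)
        \<le> C / norm x powr (1 - \<sigma>)" .
  qed
qed

end
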